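(* Let $\{R_\alpha\}_{\alpha\in\Lambda}$ be a family of rings and, for each $\alpha$, let $I_\alpha$ be an ideal of $R_\alpha$. Put $R=\prod_{\alpha} R_\alpha$ and $I=\prod_\alpha I_\alpha$ (an ideal of $R$). Then $R$ is weakly $I$-clean if and only if every $R_\alpha$ is weakly $I_\alpha$-clean and at most one $R_\alpha$ fails to be $I_\alpha$-clean.
   Context: All rings are associative with identity. $Idem(R)$ denotes the set of idempotents of $R$. For an ideal $I$ of a ring $R$: $R$ is $I$-clean if for every $x\in R$ there is $e\in Idem(R)$ with $x-e\in I$; $R$ is weakly $I$-clean if for every $x\in R$ there is $e\in Idem(R)$ such that $x-e\in I$ or $x+e\in I$. *)

theory Defs
  imports "HOL-Algebra.Ring" "HOL-Algebra.Ideal" "HOL-Library.FuncSet"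
begin

definition Idems :: "('a, 'm) ring_scheme \<Rightarrow> 'a set" where
  "Idems R = {e \<in> carrier R. mult R e e = e}"

definition I_clean :: "('a, 'm) ring_scheme \<Rightarrow> 'a set \<Rightarrow> bool" where
  "I_clean R I \<longleftrightarrow> (\<forall>x \<in> carrier R. \<exists>e \<in> Idems R. a_minus R x e \<in> I)"

definition weakly_I_clean :: "('a, 'm) ring_scheme \<Rightarrow> 'a set \<Rightarrow> bool" where
  "weakly_I_clean R I \<longleftrightarrow>
     (\<forall>x \<in> carrier R. \<exists>e \<in> Idems R. a_minus R x e \<in> I \<or> add R x e \<in> I)"

definition prod_ring :: "'i set \<Rightarrow> ('i \<Rightarrow> ('a, 'm) ring_scheme) \<Rightarrow> ('i \<Rightarrow> 'a) ring" where
  "prod_ring \<Lambda> R =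
    \<lparr> carrier = (\<Pi>\<^sub>E \<alpha>\<in>\<Lambda>. carrier (R \<alpha>)),
      mult = (\<lambda>x y. (\<lambda>\<alpha>\<in>\<Lambda>. mult (R \<alpha>) (x \<alpha>) (y \<alpha>))),
      one = (\<lambda>\<alpha>\<in>\<Lambda>. one (R \<alpha>)),
      zero = (\<lambda>\<alpha>\<in>\<Lambda>. zero (R \<alpha>)),
      add = (\<lambda>x y. (\<lambda>\<alpha>\<in>\<Lambda>. add (R \<alpha>) (x \<alpha>) (y \<alpha>))) \<rparr>"

definition prod_set :: "'i set \<Rightarrow> ('i \<Rightarrow> 'a set) \<Rightarrow> ('i \<Rightarrow> 'a) set" where
  "prod_set \<Lambda> I = (\<Pi>\<^sub>E \<alpha>\<in>\<Lambda>. I \<alpha>)"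

end

theory Submission
  imports Defs
begin

text \<open>The product is weakly \<open>I\<close>-clean exactly when every \<open>x\<close> can be lifted by idempotents
  with the same sign in all components. Since \<open>x + e \<in> I\<close> iff \<open>(-x) - e \<in> I\<close>, an
  \<open>I\<close>-clean factor lifts every element with either sign, so one factor that is merely weakly
  clean can choose the sign for all. Conversely, if two factors \<open>\<alpha> \<noteq> \<beta>\<close> are not clean, put at
  \<open>\<alpha>\<close> an element with no minus-lift and at \<open>\<beta>\<close> one with no plus-lift: no common sign works.\<close>

lemma prod_ring_carrier: "carrier (prod_ring \<Lambda> R) = (\<Pi>\<^sub>E \<alpha>\<in>\<Lambda>. carrier (R \<alpha>))"
  by (simp add: prod_ring_def)

lemma prod_ring_add: "x \<oplus>\<^bsub>prod_ring \<Lambda> R\<^esub> y = (\<lambda>\<alpha>\<in>\<Lambda>. x \<alpha> \<oplus>\<^bsub>R \<alpha>\<^esub> y \<alpha>)"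
  by (simp add: prod_ring_def)

lemma prod_ring_zero: "\<zero>\<^bsub>prod_ring \<Lambda> R\<^esub> = (\<lambda>\<alpha>\<in>\<Lambda>. \<zero>\<^bsub>R \<alpha>\<^esub>)"
  by (simp add: prod_ring_def)

lemma prod_ring_a_inv:
  assumes rings: "\<And>\<alpha>. \<alpha> \<in> \<Lambda> \<Longrightarrow> ring (R \<alpha>)"
    and y: "y \<in> carrier (prod_ring \<Lambda> R)"
  shows "\<ominus>\<^bsub>prod_ring \<Lambda> R\<^esub> y = (\<lambda>\<alpha>\<in>\<Lambda>. \<ominus>\<^bsub>R \<alpha>\<^esub> y \<alpha>)"
proof -
  let ?P = "prod_ring \<Lambda> R"
  define z where "z = (\<lambda>\<alpha>\<in>\<Lambda>. \<ominus>\<^bsub>R \<alpha>\<^esub> y \<alpha>)"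
  have y_comp: "\<And>\<alpha>. \<alpha> \<in> \<Lambda> \<Longrightarrow> y \<alpha> \<in> carrier (R \<alpha>)"
    using y by (auto simp: prod_ring_carrier)
  have z: "z \<in> carrier ?P"
    using y_comp rings by (simp add: z_def prod_ring_carrier abelian_group.a_inv_closed ring.is_abelian_group)
  have inv: "y \<oplus>\<^bsub>?P\<^esub> z = \<zero>\<^bsub>?P\<^esub>" "z \<oplus>\<^bsub>?P\<^esub> y = \<zero>\<^bsub>?P\<^esub>"
    using y_comp rings
    by (auto simp: z_def prod_ring_add prod_ring_zero abelian_group.r_neg abelian_group.l_neg
             ring.is_abelian_group intro!: restrict_ext)
  have unique: "w = z" if w: "w \<in> carrier ?P" and wy: "w \<oplus>\<^bsub>?P\<^esub> y = \<zero>\<^bsub>?P\<^esub>" for w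
  proof (rule PiE_ext[OF w[unfolded prod_ring_carrier] z[unfolded prod_ring_carrier]])
    fix \<alpha> assume \<alpha>: "\<alpha> \<in> \<Lambda>"
    interpret ring "R \<alpha>" using rings[OF \<alpha>] .
    have "w \<alpha> \<oplus>\<^bsub>R \<alpha>\<^esub> y \<alpha> = \<zero>\<^bsub>R \<alpha>\<^esub>"
      using fun_cong[OF wy, of \<alpha>] \<alpha> by (simp add: prod_ring_add prod_ring_zero)
    moreover have "w \<alpha> \<in> carrier (R \<alpha>)"
      using w \<alpha> by (auto simp: prod_ring_carrier)
    ultimately show "w \<alpha> = z \<alpha>"
      using minus_equality y_comp[OF \<alpha>] \<alpha> by (simp add: z_def)
  qed
  have "\<ominus>\<^bsub>?P\<^esub> y = z"
    unfolding a_inv_def m_inv_def by (rule the_equality) (auto simp: z inv intro: unique)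
  then show ?thesis
    by (simp add: z_def)
qed

lemma prod_ring_a_minus:
  assumes "\<And>\<alpha>. \<alpha> \<in> \<Lambda> \<Longrightarrow> ring (R \<alpha>)" and "y \<in> carrier (prod_ring \<Lambda> R)"
  shows "x \<ominus>\<^bsub>prod_ring \<Lambda> R\<^esub> y = (\<lambda>\<alpha>\<in>\<Lambda>. x \<alpha> \<ominus>\<^bsub>R \<alpha>\<^esub> y \<alpha>)"
  using prod_ring_a_inv[OF assms] by (auto simp: a_minus_def prod_ring_add intro!: restrict_ext)

lemma restrict_eq_iff: "restrict f A = g \<longleftrightarrow> g \<in> extensional A \<and> (\<forall>x\<in>A. f x = g x)"
  by (auto simp: fun_eq_iff extensional_def)

lemma Idems_prod_ring:
  "e \<in> Idems (prod_ring \<Lambda> R) \<longleftrightarrow> e \<in> extensional \<Lambda> \<and> (\<forall>\<alpha>\<in>\<Lambda>. e \<alpha> \<in> Idems (R \<alpha>))"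
  by (auto simp: Idems_def prod_ring_def PiE_def restrict_eq_iff)

lemma restrict_mem_prod_set: "restrict f \<Lambda> \<in> prod_set \<Lambda> I \<longleftrightarrow> (\<forall>\<alpha>\<in>\<Lambda>. f \<alpha> \<in> I \<alpha>)"
  by (simp add: prod_set_def Pi_iff)

lemma bex_Idems_prod_ring_iff:
  "(\<exists>e\<in>Idems (prod_ring \<Lambda> R). \<forall>\<alpha>\<in>\<Lambda>. P \<alpha> (e \<alpha>)) \<longleftrightarrow> (\<forall>\<alpha>\<in>\<Lambda>. \<exists>e\<in>Idems (R \<alpha>). P \<alpha> e)"
proof
  assume "\<forall>\<alpha>\<in>\<Lambda>. \<exists>e\<in>Idems (R \<alpha>). P \<alpha> e"
  then obtain g where "\<forall>\<alpha>\<in>\<Lambda>. g \<alpha> \<in> Idems (R \<alpha>) \<and> P \<alpha> (g \<alpha>)"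
    by metis
  then show "\<exists>e\<in>Idems (prod_ring \<Lambda> R). \<forall>\<alpha>\<in>\<Lambda>. P \<alpha> (e \<alpha>)"
    by (intro bexI[of _ "restrict g \<Lambda>"]) (auto simp: Idems_prod_ring)
qed (auto simp: Idems_prod_ring)

lemma weakly_I_clean_prod_iff:
  assumes "\<And>\<alpha>. \<alpha> \<in> \<Lambda> \<Longrightarrow> ring (R \<alpha>)"
  shows "weakly_I_clean (prod_ring \<Lambda> R) (prod_set \<Lambda> I) \<longleftrightarrow>
    (\<forall>x\<in>carrier (prod_ring \<Lambda> R).
       (\<forall>\<alpha>\<in>\<Lambda>. \<exists>e\<in>Idems (R \<alpha>). x \<alpha> \<ominus>\<^bsub>R \<alpha>\<^esub> e \<in> I \<alpha>) \<or>
       (\<forall>\<alpha>\<in>\<Lambda>. \<exists>e\<in>Idems (R \<alpha>). x \<alpha> \<oplus>\<^bsub>R \<alpha>\<^esub> e \<in> I \<alpha>))"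
proof -
  let ?P = "prod_ring \<Lambda> R"
  have minus: "x \<ominus>\<^bsub>?P\<^esub> e \<in> prod_set \<Lambda> I \<longleftrightarrow> (\<forall>\<alpha>\<in>\<Lambda>. x \<alpha> \<ominus>\<^bsub>R \<alpha>\<^esub> e \<alpha> \<in> I \<alpha>)"
    and plus: "x \<oplus>\<^bsub>?P\<^esub> e \<in> prod_set \<Lambda> I \<longleftrightarrow> (\<forall>\<alpha>\<in>\<Lambda>. x \<alpha> \<oplus>\<^bsub>R \<alpha>\<^esub> e \<alpha> \<in> I \<alpha>)"
    if "e \<in> Idems ?P" for x e
    using that by (simp_all add: Idems_def prod_ring_a_minus[OF assms] prod_ring_add restrict_mem_prod_set)
  have "(\<exists>e\<in>Idems ?P. x \<ominus>\<^bsub>?P\<^esub> e \<in> prod_set \<Lambda> I \<or> x \<oplus>\<^bsub>?P\<^esub> e \<in> prod_set \<Lambda> I) \<longleftrightarrow>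
        (\<exists>e\<in>Idems ?P. \<forall>\<alpha>\<in>\<Lambda>. x \<alpha> \<ominus>\<^bsub>R \<alpha>\<^esub> e \<alpha> \<in> I \<alpha>) \<or>
        (\<exists>e\<in>Idems ?P. \<forall>\<alpha>\<in>\<Lambda>. x \<alpha> \<oplus>\<^bsub>R \<alpha>\<^esub> e \<alpha> \<in> I \<alpha>)" for x
    using minus plus by blast
  then show ?thesis
    unfolding weakly_I_clean_def
    using bex_Idems_prod_ring_iff[of \<Lambda> R "\<lambda>\<alpha> e. _ \<alpha> \<ominus>\<^bsub>R \<alpha>\<^esub> e \<in> I \<alpha>"]
      bex_Idems_prod_ring_iff[of \<Lambda> R "\<lambda>\<alpha> e. _ \<alpha> \<oplus>\<^bsub>R \<alpha>\<^esub> e \<in> I \<alpha>"]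
    by simp
qed

lemma a_minus_a_inv_mem_ideal_iff:
  assumes "ring R" "ideal I R" "x \<in> carrier R" "e \<in> carrier R"
  shows "(\<ominus>\<^bsub>R\<^esub> x) \<ominus>\<^bsub>R\<^esub> e \<in> I \<longleftrightarrow> x \<oplus>\<^bsub>R\<^esub> e \<in> I"
proof -
  interpret ring R by fact
  interpret I: ideal I R by fact
  have neg_mem_iff: "\<ominus>\<^bsub>R\<^esub> a \<in> I \<longleftrightarrow> a \<in> I" if "a \<in> carrier R" for a
    using I.a_inv_closed[of "\<ominus>\<^bsub>R\<^esub> a"] I.a_inv_closed[of a] minus_minus[OF that] by auto
  have "(\<ominus>\<^bsub>R\<^esub> x) \<ominus>\<^bsub>R\<^esub> e \<in> I \<longleftrightarrow> \<ominus>\<^bsub>R\<^esub> ((\<ominus>\<^bsub>R\<^esub> x) \<ominus>\<^bsub>R\<^esub> e) \<in> I"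
    using neg_mem_iff assms(3,4) by simp
  also have "\<ominus>\<^bsub>R\<^esub> ((\<ominus>\<^bsub>R\<^esub> x) \<ominus>\<^bsub>R\<^esub> e) = x \<oplus>\<^bsub>R\<^esub> e"
    using assms(3,4) by (simp add: a_minus_def minus_add)
  finally show ?thesis .
qed

lemma I_clean_iff_plus:
  assumes "ring R" "ideal I R"
  shows "I_clean R I \<longleftrightarrow> (\<forall>x\<in>carrier R. \<exists>e\<in>Idems R. x \<oplus>\<^bsub>R\<^esub> e \<in> I)"
proof -
  interpret ring R by fact
  have sign: "(\<exists>e\<in>Idems R. (\<ominus>\<^bsub>R\<^esub> x) \<ominus>\<^bsub>R\<^esub> e \<in> I) \<longleftrightarrow> (\<exists>e\<in>Idems R. x \<oplus>\<^bsub>R\<^esub> e \<in> I)"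
    if "x \<in> carrier R" for x
    using that a_minus_a_inv_mem_ideal_iff[OF assms] by (auto simp: Idems_def)
  have reindex: "(\<forall>x\<in>carrier R. P (\<ominus>\<^bsub>R\<^esub> x)) \<longleftrightarrow> (\<forall>x\<in>carrier R. P x)" for P
  proof
    assume P: "\<forall>x\<in>carrier R. P (\<ominus>\<^bsub>R\<^esub> x)"
    show "\<forall>x\<in>carrier R. P x"
    proof
      fix x assume "x \<in> carrier R"
      then show "P x"
        using P[rule_format, of "\<ominus>\<^bsub>R\<^esub> x"] by simp
    qed
  qed simp
  have "I_clean R I \<longleftrightarrow> (\<forall>x\<in>carrier R. \<exists>e\<in>Idems R. (\<ominus>\<^bsub>R\<^esub> x) \<ominus>\<^bsub>R\<^esub> e \<in> I)"
    unfolding I_clean_def by (rule reindex[symmetric])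
  also have "\<dots> \<longleftrightarrow> (\<forall>x\<in>carrier R. \<exists>e\<in>Idems R. x \<oplus>\<^bsub>R\<^esub> e \<in> I)"
    using sign by simp
  finally show ?thesis .
qed

lemma weakly_I_clean_prod_factor:
  assumes rings: "\<And>\<alpha>. \<alpha> \<in> \<Lambda> \<Longrightarrow> ring (R \<alpha>)"
    and W: "weakly_I_clean (prod_ring \<Lambda> R) (prod_set \<Lambda> I)" and \<alpha>: "\<alpha> \<in> \<Lambda>"
  shows "weakly_I_clean (R \<alpha>) (I \<alpha>)"
  unfolding weakly_I_clean_def
proof
  fix a assume a: "a \<in> carrier (R \<alpha>)"
  define x where "x = (\<lambda>\<gamma>\<in>\<Lambda>. if \<gamma> = \<alpha> then a else \<zero>\<^bsub>R \<gamma>\<^esub>)"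
  have "x \<in> carrier (prod_ring \<Lambda> R)"
    using a rings by (simp add: x_def prod_ring_carrier ring.ring_simprules(2))
  with W have "(\<exists>e\<in>Idems (R \<alpha>). x \<alpha> \<ominus>\<^bsub>R \<alpha>\<^esub> e \<in> I \<alpha>) \<or> (\<exists>e\<in>Idems (R \<alpha>). x \<alpha> \<oplus>\<^bsub>R \<alpha>\<^esub> e \<in> I \<alpha>)"
    using \<alpha> by (auto simp: weakly_I_clean_prod_iff[OF rings])
  moreover have "x \<alpha> = a"
    using \<alpha> by (simp add: x_def)
  ultimately show "\<exists>e\<in>Idems (R \<alpha>). a \<ominus>\<^bsub>R \<alpha>\<^esub> e \<in> I \<alpha> \<or> a \<oplus>\<^bsub>R \<alpha>\<^esub> e \<in> I \<alpha>"
    by auto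
qed

lemma weakly_I_clean_prod_not_I_clean_unique:
  assumes rings: "\<And>\<alpha>. \<alpha> \<in> \<Lambda> \<Longrightarrow> ring (R \<alpha>)"
    and ideals: "\<And>\<alpha>. \<alpha> \<in> \<Lambda> \<Longrightarrow> ideal (I \<alpha>) (R \<alpha>)"
    and W: "weakly_I_clean (prod_ring \<Lambda> R) (prod_set \<Lambda> I)"
    and \<alpha>: "\<alpha> \<in> \<Lambda>" "\<not> I_clean (R \<alpha>) (I \<alpha>)"
    and \<beta>: "\<beta> \<in> \<Lambda>" "\<not> I_clean (R \<beta>) (I \<beta>)"
  shows "\<alpha> = \<beta>"
proof (rule ccontr)
  assume ne: "\<alpha> \<noteq> \<beta>"
  obtain a where a: "a \<in> carrier (R \<alpha>)" "\<forall>e\<in>Idems (R \<alpha>). a \<ominus>\<^bsub>R \<alpha>\<^esub> e \<notin> I \<alpha>"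
    using \<alpha>(2) unfolding I_clean_def by blast
  obtain b where b: "b \<in> carrier (R \<beta>)" "\<forall>e\<in>Idems (R \<beta>). b \<oplus>\<^bsub>R \<beta>\<^esub> e \<notin> I \<beta>"
    using \<beta>(2) unfolding I_clean_iff_plus[OF rings[OF \<beta>(1)] ideals[OF \<beta>(1)]] by blast
  define x where "x = (\<lambda>\<gamma>\<in>\<Lambda>. if \<gamma> = \<alpha> then a else if \<gamma> = \<beta> then b else \<zero>\<^bsub>R \<gamma>\<^esub>)"
  have "x \<in> carrier (prod_ring \<Lambda> R)"
    using a b rings by (simp add: x_def prod_ring_carrier ring.ring_simprules(2))
  with W have "(\<exists>e\<in>Idems (R \<alpha>). x \<alpha> \<ominus>\<^bsub>R \<alpha>\<^esub> e \<in> I \<alpha>) \<or> (\<exists>e\<in>Idems (R \<beta>). x \<beta> \<oplus>\<^bsub>R \<beta>\<^esub> e \<in> I \<beta>)"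
    using \<alpha>(1) \<beta>(1) by (auto simp: weakly_I_clean_prod_iff[OF rings])
  moreover have "x \<alpha> = a" "x \<beta> = b"
    using \<alpha>(1) \<beta>(1) ne by (simp_all add: x_def)
  ultimately show False
    using a(2) b(2) by auto
qed

lemma weakly_I_clean_prod_if_I_clean_except:
  assumes rings: "\<And>\<alpha>. \<alpha> \<in> \<Lambda> \<Longrightarrow> ring (R \<alpha>)"
    and ideals: "\<And>\<alpha>. \<alpha> \<in> \<Lambda> \<Longrightarrow> ideal (I \<alpha>) (R \<alpha>)"
    and weak: "\<forall>\<alpha>\<in>\<Lambda>. weakly_I_clean (R \<alpha>) (I \<alpha>)"
    and clean: "\<forall>\<alpha>\<in>\<Lambda> - {\<alpha>\<^sub>0}. I_clean (R \<alpha>) (I \<alpha>)"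
  shows "weakly_I_clean (prod_ring \<Lambda> R) (prod_set \<Lambda> I)"
proof (rule weakly_I_clean_prod_iff[THEN iffD2], fact rings, intro ballI)
  fix x assume "x \<in> carrier (prod_ring \<Lambda> R)"
  then have x: "\<And>\<alpha>. \<alpha> \<in> \<Lambda> \<Longrightarrow> x \<alpha> \<in> carrier (R \<alpha>)"
    by (auto simp: prod_ring_carrier)
  have minus_off: "\<exists>e\<in>Idems (R \<alpha>). x \<alpha> \<ominus>\<^bsub>R \<alpha>\<^esub> e \<in> I \<alpha>" and
       plus_off: "\<exists>e\<in>Idems (R \<alpha>). x \<alpha> \<oplus>\<^bsub>R \<alpha>\<^esub> e \<in> I \<alpha>"
    if "\<alpha> \<in> \<Lambda> - {\<alpha>\<^sub>0}" for \<alpha>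
  proof -
    from that have "\<alpha> \<in> \<Lambda>" by simp
    moreover have "I_clean (R \<alpha>) (I \<alpha>)"
      using clean that ..
    ultimately show "\<exists>e\<in>Idems (R \<alpha>). x \<alpha> \<ominus>\<^bsub>R \<alpha>\<^esub> e \<in> I \<alpha>" "\<exists>e\<in>Idems (R \<alpha>). x \<alpha> \<oplus>\<^bsub>R \<alpha>\<^esub> e \<in> I \<alpha>"
      using x I_clean_iff_plus[OF rings ideals] unfolding I_clean_def by blast+
  qed
  show "(\<forall>\<alpha>\<in>\<Lambda>. \<exists>e\<in>Idems (R \<alpha>). x \<alpha> \<ominus>\<^bsub>R \<alpha>\<^esub> e \<in> I \<alpha>) \<or>
        (\<forall>\<alpha>\<in>\<Lambda>. \<exists>e\<in>Idems (R \<alpha>). x \<alpha> \<oplus>\<^bsub>R \<alpha>\<^esub> e \<in> I \<alpha>)"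
  proof (cases "\<alpha>\<^sub>0 \<in> \<Lambda>")
    case True
    then consider
        (minus) "\<exists>e\<in>Idems (R \<alpha>\<^sub>0). x \<alpha>\<^sub>0 \<ominus>\<^bsub>R \<alpha>\<^sub>0\<^esub> e \<in> I \<alpha>\<^sub>0"
      | (plus) "\<exists>e\<in>Idems (R \<alpha>\<^sub>0). x \<alpha>\<^sub>0 \<oplus>\<^bsub>R \<alpha>\<^sub>0\<^esub> e \<in> I \<alpha>\<^sub>0"
      using weak x unfolding weakly_I_clean_def by blast
    then show ?thesis
    proof cases
      case minus
      then have "\<forall>\<alpha>\<in>\<Lambda>. \<exists>e\<in>Idems (R \<alpha>). x \<alpha> \<ominus>\<^bsub>R \<alpha>\<^esub> e \<in> I \<alpha>"
        using minus_off by (metis Diff_iff singletonD)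
      then show ?thesis ..
    next
      case plus
      then have "\<forall>\<alpha>\<in>\<Lambda>. \<exists>e\<in>Idems (R \<alpha>). x \<alpha> \<oplus>\<^bsub>R \<alpha>\<^esub> e \<in> I \<alpha>"
        using plus_off by (metis Diff_iff singletonD)
      then show ?thesis ..
    qed
  next
    case False
    then show ?thesis
      using minus_off by blast
  qed
qed

theorem mainTheorem1:
  fixes \<Lambda> :: "'i set"
    and R :: "'i \<Rightarrow> ('a, 'm) ring_scheme"
    and I :: "'i \<Rightarrow> 'a set"
  assumes rings: "\<And>\<alpha>. \<alpha> \<in> \<Lambda> \<Longrightarrow> ring (R \<alpha>)"
    and ideals: "\<And>\<alpha>. \<alpha> \<in> \<Lambda> \<Longrightarrow> ideal (I \<alpha>) (R \<alpha>)"
  shows "weakly_I_clean (prod_ring \<Lambda> R) (prod_set \<Lambda> I) \<longleftrightarrow>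
           ((\<forall>\<alpha> \<in> \<Lambda>. weakly_I_clean (R \<alpha>) (I \<alpha>)) \<and>
            (\<forall>\<alpha> \<in> \<Lambda>. \<forall>\<beta> \<in> \<Lambda>.
               \<not> I_clean (R \<alpha>) (I \<alpha>) \<and> \<not> I_clean (R \<beta>) (I \<beta>) \<longrightarrow> \<alpha> = \<beta>))"
    (is "?W \<longleftrightarrow> ?weak \<and> ?unique")
proof
  assume W: ?W
  show "?weak \<and> ?unique"
    using weakly_I_clean_prod_factor[where \<Lambda> = \<Lambda> and R = R, OF rings W]
      weakly_I_clean_prod_not_I_clean_unique[where \<Lambda> = \<Lambda> and R = R, OF rings ideals W]
    by blast
next
  assume "?weak \<and> ?unique"
  moreover obtain \<alpha>\<^sub>0 where "\<forall>\<alpha>\<in>\<Lambda> - {\<alpha>\<^sub>0}. I_clean (R \<alpha>) (I \<alpha>)"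
    using \<open>?weak \<and> ?unique\<close> by blast
  ultimately show ?W
    using weakly_I_clean_prod_if_I_clean_except[where \<Lambda> = \<Lambda> and R = R, OF rings ideals] by blast
qed

end
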